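(* A geodesic metric space is $(L,C)$-quasi-isometric to $\mathbb{R}$ for some $L\geqslant 1$, $C\geqslant 0$ if and only if it is $(1,C')$-quasi-isometric to $\mathbb{R}$ for some $C'\geqslant 0$.
   Context: A map $f:(X,d_X)\to(Y,d_Y)$ is an $(L,C)$-quasi-isometry if $\frac1L d_X(a,b)-C\leqslant d_Y(f(a),f(b))\leqslant Ld_X(a,b)+C$ for all $a,b\in X$ and every point of $Y$ is within distance $C$ of $f(X)$. $\mathbb{R}$ carries its standard metric. *)

theory Defs
  imports Complex_Main
begin

definition geodesic_space :: "'a::metric_space set \<Rightarrow> bool" where
  "geodesic_space S \<longleftrightarrow>
     (\<forall>a\<in>S. \<forall>b\<in>S. \<exists>\<gamma> :: real \<Rightarrow> 'a.
        \<gamma> 0 = a \<and> \<gamma> (dist a b) = b \<and> \<gamma> ` {0..dist a b} \<subseteq> S \<and>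
        (\<forall>s\<in>{0..dist a b}. \<forall>t\<in>{0..dist a b}. dist (\<gamma> s) (\<gamma> t) = \<bar>s - t\<bar>))"

definition qi_map :: "real \<Rightarrow> real \<Rightarrow> ('a::metric_space \<Rightarrow> 'b::metric_space) \<Rightarrow> bool" where
  "qi_map L C f \<longleftrightarrow>
     (\<forall>a b. dist a b / L - C \<le> dist (f a) (f b) \<and> dist (f a) (f b) \<le> L * dist a b + C) \<and>
     (\<forall>y. \<exists>x. dist y (f x) \<le> C)"

end

theory Submission
  imports Defs
begin

text \<open>
  Let \<open>f\<close> be an \<open>(L,C)\<close>-quasi-isometry from a geodesic space to \<open>\<real>\<close>.
  Along a geodesic from \<open>x\<close> to \<open>y\<close>, \<open>f\<close> moves in coarse steps and hence comes
  close to every value between \<open>f x\<close> and \<open>f y\<close>; since \<open>f\<close> is coarsely injective,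
  every \<open>z\<close> with \<open>f z\<close> between \<open>f x\<close> and \<open>f y\<close> lies close to that geodesic:
  \<open>d(x,z) + d(z,y) \<le> d(x,y) + K\<close> for a constant \<open>K\<close>. Fix a base point \<open>p\<close> and
  send \<open>x\<close> to \<open>\<plusminus>d(x,p)\<close>, the sign telling on which side of \<open>f p\<close> the value
  \<open>f x\<close> lies. Coarse betweenness shows that this map changes distances by at most
  \<open>K\<close>, and walking the distance \<open>|t|\<close> from \<open>p\<close> towards a far point on the side
  of \<open>t\<close> shows that it is coarsely onto.
\<close>

lemma coarse_intermediate_value:
  fixes \<phi> :: "real \<Rightarrow> real"
  assumes "0 \<le> D" "0 \<le> L" "\<phi> 0 \<le> v" "v \<le> \<phi> D"
    and lip: "\<And>s t. s \<in> {0..D} \<Longrightarrow> t \<in> {0..D} \<Longrightarrow> \<bar>\<phi> s - \<phi> t\<bar> \<le> L * \<bar>s - t\<bar> + C"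
  shows "\<exists>r\<in>{0..D}. \<bar>\<phi> r - v\<bar> \<le> L + C"
proof -
  define S where "S = {r \<in> {0..D}. \<phi> r \<le> v}"
  have "0 \<in> S" "bdd_above S"
    using assms(1,3) by (auto simp: S_def intro: bdd_aboveI[of _ D])
  then obtain r where r: "r \<in> S" "Sup S - 1/2 < r"
    using less_cSup_iff[of S "Sup S - 1/2"] by auto
  define r' where "r' = min D (r + 1)"
  have r': "r' \<in> {0..D}" "\<bar>r' - r\<bar> \<le> 1"
    using r(1) by (auto simp: S_def r'_def)
  have "0 \<le> C"
    using lip[of 0 0] assms(1) by simp
  show ?thesis
  proof (cases "r' \<in> S")
    case True
    have "r' = D"
      using cSup_upper[OF True \<open>bdd_above S\<close>] r(2) by (auto simp: r'_def)
    with True have "\<phi> r' = v"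
      using assms(4) by (auto simp: S_def)
    with r' show ?thesis
      using \<open>0 \<le> L\<close> \<open>0 \<le> C\<close> by force
  next
    case False
    have "\<bar>\<phi> r' - \<phi> r\<bar> \<le> L * \<bar>r' - r\<bar> + C"
      using lip r' r(1) by (auto simp: S_def)
    also have "\<dots> \<le> L + C"
      using mult_left_mono[OF r'(2) \<open>0 \<le> L\<close>] by simp
    finally show ?thesis
      using False r' r(1) by (intro bexI[of _ r']) (auto simp: S_def)
  qed
qed

lemma geodesic_segmentE:
  assumes "geodesic_space S" "a \<in> S" "b \<in> S"
  obtains \<gamma> where "\<gamma> 0 = a" "\<gamma> (dist a b) = b"
    "\<And>s t. s \<in> {0..dist a b} \<Longrightarrow> t \<in> {0..dist a b} \<Longrightarrow> dist (\<gamma> s) (\<gamma> t) = \<bar>s - t\<bar>"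
    "\<And>r. r \<in> {0..dist a b} \<Longrightarrow> dist a (\<gamma> r) = r \<and> dist (\<gamma> r) b = dist a b - r"
proof -
  obtain \<gamma> where \<gamma>: "\<gamma> 0 = a" "\<gamma> (dist a b) = b"
    and iso: "\<And>s t. s \<in> {0..dist a b} \<Longrightarrow> t \<in> {0..dist a b} \<Longrightarrow> dist (\<gamma> s) (\<gamma> t) = \<bar>s - t\<bar>"
    using assms unfolding geodesic_space_def by meson
  have on_segment: "dist a (\<gamma> r) = r \<and> dist (\<gamma> r) b = dist a b - r"
    if "r \<in> {0..dist a b}" for r
    using iso[of 0 r] iso[of r "dist a b"] that \<gamma> by auto
  show ?thesis
    using that[OF \<gamma> iso on_segment] .
qed

lemma coarse_betweenness:
  fixes f :: "'a::metric_space \<Rightarrow> real"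
  assumes geo: "geodesic_space (UNIV :: 'a set)" and "0 < L"
    and lower: "\<And>a b. dist a b / L - C \<le> dist (f a) (f b)"
    and upper: "\<And>a b. dist (f a) (f b) \<le> L * dist a b + C"
    and ordered: "f x \<le> f z" "f z \<le> f y"
  shows "dist x z + dist z y \<le> dist x y + 2 * L * (L + 2 * C)"
proof -
  obtain \<gamma> where \<gamma>: "\<gamma> 0 = x" "\<gamma> (dist x y) = y"
    and iso: "\<And>s t. s \<in> {0..dist x y} \<Longrightarrow> t \<in> {0..dist x y} \<Longrightarrow> dist (\<gamma> s) (\<gamma> t) = \<bar>s - t\<bar>"
    and on_segment: "\<And>r. r \<in> {0..dist x y} \<Longrightarrow> dist x (\<gamma> r) = r \<and> dist (\<gamma> r) y = dist x y - r"
    by (rule geodesic_segmentE[where a = x and b = y, OF geo UNIV_I UNIV_I]) blast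
  obtain r where r: "r \<in> {0..dist x y}" "\<bar>f (\<gamma> r) - f z\<bar> \<le> L + C"
  proof (rule bexE[OF coarse_intermediate_value[of "dist x y" L "\<lambda>r. f (\<gamma> r)" "f z" C]])
    show "\<bar>f (\<gamma> s) - f (\<gamma> t)\<bar> \<le> L * \<bar>s - t\<bar> + C"
      if "s \<in> {0..dist x y}" "t \<in> {0..dist x y}" for s t
      using upper[of "\<gamma> s" "\<gamma> t"] iso[OF that] by (simp add: dist_real_def)
  qed (use \<gamma> ordered \<open>0 < L\<close> in auto)
  have "dist (\<gamma> r) z / L \<le> L + 2 * C"
    using lower[of "\<gamma> r" z] r(2) by (simp add: dist_real_def)
  then have near: "dist (\<gamma> r) z \<le> L * (L + 2 * C)"
    using \<open>0 < L\<close> by (simp add: divide_le_eq mult.commute)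
  have "dist x z + dist z y \<le> (dist x (\<gamma> r) + dist (\<gamma> r) z) + (dist z (\<gamma> r) + dist (\<gamma> r) y)"
    by (intro add_mono dist_triangle)
  also have "\<dots> \<le> dist x y + 2 * L * (L + 2 * C)"
    using on_segment[OF r(1)] near by (simp add: dist_commute)
  finally show ?thesis .
qed

definition signed_dist :: "('a::metric_space \<Rightarrow> 'b::linorder) \<Rightarrow> 'a \<Rightarrow> 'a \<Rightarrow> real" where
  "signed_dist f p x = (if f p \<le> f x then dist x p else - dist x p)"

lemma signed_dist_almost_isometric:
  fixes f :: "'a::metric_space \<Rightarrow> 'b::linorder"
  assumes between: "\<And>x y z. f x \<le> f z \<Longrightarrow> f z \<le> f y \<Longrightarrow> dist x z + dist z y \<le> dist x y + K"
  shows "\<bar>dist (signed_dist f p a) (signed_dist f p b) - dist a b\<bar> \<le> K"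
proof (cases "f p \<le> f a \<longleftrightarrow> f p \<le> f b")
  case True
  then have "dist (signed_dist f p a) (signed_dist f p b) = \<bar>dist a p - dist b p\<bar>"
    by (auto simp: signed_dist_def dist_real_def abs_minus_commute)
  moreover have "\<bar>dist a p - dist b p\<bar> \<le> dist a b"
    using abs_dist_diff_le[of a p b] by (simp add: dist_commute)
  moreover have "dist a b \<le> \<bar>dist a p - dist b p\<bar> + K"
  proof -
    from True consider "f p \<le> f a" "f a \<le> f b" | "f p \<le> f b" "f b \<le> f a"
      | "f b \<le> f a" "f a \<le> f p" | "f a \<le> f b" "f b \<le> f p"
      using le_cases[of "f a" "f b"] le_cases[of "f p" "f a"] le_cases[of "f p" "f b"] by blast
    then have "dist p a + dist a b \<le> dist p b + K \<or> dist p b + dist b a \<le> dist p a + K"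
      by cases (use between[of p a b] between[of p b a] between[of b a p] between[of a b p] in
        \<open>auto simp: dist_commute\<close>)
    then show ?thesis
      by (auto simp: dist_commute)
  qed
  ultimately show ?thesis
    by linarith
next
  case False
  then have "dist (signed_dist f p a) (signed_dist f p b) = dist a p + dist p b"
    by (auto simp: signed_dist_def dist_real_def dist_commute)
      (use zero_le_dist[of a p] zero_le_dist[of b p] in arith)
  moreover have "f a \<le> f p \<and> f p \<le> f b \<or> f b \<le> f p \<and> f p \<le> f a"
    using False by auto
  ultimately show ?thesis
    using between[of a p b] between[of b p a] dist_triangle[of a b p] by (auto simp: dist_commute)
qed

lemma signed_dist_coarsely_onto:
  fixes f :: "'a::metric_space \<Rightarrow> 'b::linorder"
  assumes geo: "geodesic_space (UNIV :: 'a set)"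
    and between: "\<And>x y z. f x \<le> f z \<Longrightarrow> f z \<le> f y \<Longrightarrow> dist x z + dist z y \<le> dist x y + K"
    and far_above: "\<And>r. \<exists>y. f p < f y \<and> r \<le> dist p y"
    and far_below: "\<And>r. \<exists>y. f y < f p \<and> r \<le> dist p y"
  shows "\<exists>x. dist t (signed_dist f p x) \<le> K"
proof -
  obtain y where side: "(0 \<le> t \<longrightarrow> f p < f y) \<and> (t < 0 \<longrightarrow> f y < f p)" and far: "\<bar>t\<bar> \<le> dist p y"
    using far_above[of "\<bar>t\<bar>"] far_below[of "\<bar>t\<bar>"] by (cases "0 \<le> t") auto
  obtain \<gamma> where on_segment: "\<And>r. r \<in> {0..dist p y} \<Longrightarrow> dist p (\<gamma> r) = r \<and> dist (\<gamma> r) y = dist p y - r"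
    using geodesic_segmentE[where a = p and b = y, OF geo UNIV_I UNIV_I] by metis
  define x where "x = \<gamma> \<bar>t\<bar>"
  have x: "dist x p = \<bar>t\<bar>" "dist x y = dist p y - \<bar>t\<bar>"
    using on_segment[of "\<bar>t\<bar>"] far by (auto simp: x_def dist_commute)
  show ?thesis
  proof (cases "f x \<le> f p \<and> f p \<le> f y \<or> f y \<le> f p \<and> f p \<le> f x")
    \<comment> \<open>If \<open>f\<close> puts \<open>x\<close> on the wrong side of \<open>p\<close>, then \<open>p\<close> is coarsely between \<open>x\<close> and \<open>y\<close>,
      which is impossible on a geodesic unless \<open>|t| \<le> K/2\<close>.\<close>
    case True
    then have "dist x p + dist p y \<le> dist x y + K"
      using between[of x p y] between[of y p x] by (auto simp: dist_commute)
    then have "2 * \<bar>t\<bar> \<le> K"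
      using x dist_commute[of p y] by linarith
    then show ?thesis
      by (intro exI[of _ x]) (auto simp: signed_dist_def dist_real_def x)
  next
    case False
    with side have "signed_dist f p x = t"
      by (cases "0 \<le> t") (auto simp: signed_dist_def x)
    then show ?thesis
      using between[of p p p] by (intro exI[of _ x]) simp
  qed
qed

lemma coarsely_onto_far_point_above:
  fixes f :: "'a::metric_space \<Rightarrow> real"
  assumes "0 < L"
    and upper: "\<And>a b. dist (f a) (f b) \<le> L * dist a b + C"
    and onto: "\<And>v. \<exists>x. dist v (f x) \<le> C"
  shows "\<exists>y. f p < f y \<and> r \<le> dist p y"
proof -
  obtain y where y: "dist (f p + L * \<bar>r\<bar> + 2 * C + 1) (f y) \<le> C"
    using onto by blast
  have "0 \<le> C"
    using upper[of p p] by simp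
  moreover have "0 \<le> L * \<bar>r\<bar>"
    using \<open>0 < L\<close> by simp
  ultimately have "L * \<bar>r\<bar> + C + 1 \<le> dist (f y) (f p)" "f p < f y"
    using y by (auto simp: dist_real_def abs_le_iff)
  moreover have "dist (f y) (f p) \<le> L * dist y p + C"
    by (rule upper)
  ultimately have "L * \<bar>r\<bar> \<le> L * dist p y" "f p < f y"
    by (simp_all add: dist_commute)
  with \<open>0 < L\<close> show ?thesis
    by (auto intro: order_trans[OF abs_ge_self])
qed

lemma coarsely_onto_far_point_below:
  fixes f :: "'a::metric_space \<Rightarrow> real"
  assumes "0 < L"
    and upper: "\<And>a b. dist (f a) (f b) \<le> L * dist a b + C"
    and onto: "\<And>v. \<exists>x. dist v (f x) \<le> C"
  shows "\<exists>y. f y < f p \<and> r \<le> dist p y"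
proof -
  have dist_uminus: "dist (- u) (- w) = dist u w" for u w :: real
    by (simp add: dist_real_def abs_minus_commute)
  have "\<exists>y. - f p < - f y \<and> r \<le> dist p y"
  proof (rule coarsely_onto_far_point_above[OF \<open>0 < L\<close>])
    show "dist (- f a) (- f b) \<le> L * dist a b + C" for a b
      using upper[of a b] by (simp add: dist_uminus)
    show "\<exists>x. dist v (- f x) \<le> C" for v
      using onto[of "- v"] by (metis dist_uminus minus_minus)
  qed
  then show ?thesis
    by simp
qed

lemma qi_map_1_iff:
  "qi_map 1 C f \<longleftrightarrow>
    (\<forall>a b. \<bar>dist (f a) (f b) - dist a b\<bar> \<le> C) \<and> (\<forall>y. \<exists>x. dist y (f x) \<le> C)"
  by (auto simp: qi_map_def abs_le_iff algebra_simps)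

lemma qi_map_signed_dist:
  fixes f :: "'a::metric_space \<Rightarrow> real"
  assumes geo: "geodesic_space (UNIV :: 'a set)" and "0 < L" and "qi_map L C f"
  shows "qi_map 1 (2 * L * (L + 2 * C)) (signed_dist f p)"
proof -
  have lower: "\<And>a b. dist a b / L - C \<le> dist (f a) (f b)"
    and upper: "\<And>a b. dist (f a) (f b) \<le> L * dist a b + C"
    and onto: "\<And>v. \<exists>x. dist v (f x) \<le> C"
    using \<open>qi_map L C f\<close> by (auto simp: qi_map_def)
  have between: "dist x z + dist z y \<le> dist x y + 2 * L * (L + 2 * C)"
    if "f x \<le> f z" "f z \<le> f y" for x y z
    by (rule coarse_betweenness[OF geo \<open>0 < L\<close> lower upper that])
  show ?thesis
    unfolding qi_map_1_iff
    using signed_dist_almost_isometric[OF between]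
      signed_dist_coarsely_onto[OF geo between
        coarsely_onto_far_point_above[OF \<open>0 < L\<close> upper onto]
        coarsely_onto_far_point_below[OF \<open>0 < L\<close> upper onto]]
    by blast
qed

theorem corollary4p12:
  assumes "geodesic_space (UNIV :: 'a::metric_space set)"
  shows "(\<exists>L C (f :: 'a \<Rightarrow> real). L \<ge> 1 \<and> C \<ge> 0 \<and> qi_map L C f) \<longleftrightarrow>
         (\<exists>C' (f :: 'a \<Rightarrow> real). C' \<ge> 0 \<and> qi_map 1 C' f)"
proof
  assume "\<exists>C' (f :: 'a \<Rightarrow> real). C' \<ge> 0 \<and> qi_map 1 C' f"
  then show "\<exists>L C (f :: 'a \<Rightarrow> real). L \<ge> 1 \<and> C \<ge> 0 \<and> qi_map L C f"
    by auto
next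
  assume "\<exists>L C (f :: 'a \<Rightarrow> real). L \<ge> 1 \<and> C \<ge> 0 \<and> qi_map L C f"
  then obtain L C and f :: "'a \<Rightarrow> real" where "1 \<le> L" "0 \<le> C" "qi_map L C f"
    by blast
  then have "qi_map 1 (2 * L * (L + 2 * C)) (signed_dist f undefined)"
    by (intro qi_map_signed_dist[OF assms]) simp_all
  moreover have "0 \<le> 2 * L * (L + 2 * C)"
    using \<open>1 \<le> L\<close> \<open>0 \<le> C\<close> by simp
  ultimately show "\<exists>C' (f :: 'a \<Rightarrow> real). C' \<ge> 0 \<and> qi_map 1 C' f"
    by blast
qed

end
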